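(* Let $p\in(0,1)$ and $N=1/(1-p)$. For integers $s\ge0$ and $r\ge0$, $$F_s(r)\le p^{r/2}\,N^s\,4^s .$$
   Context: For $L\in\mathbb N$ and $j\in\mathbb Z$ define the chain functions $F_0(j)=p^{|j|}$ and, for $L\ge1$, $$F_L(j)=\sum_{j_1,\dots,j_L\in\mathbb Z}p^{|j-j_1|+|j_1-j_2|+\cdots+|j_{L-1}-j_L|+|j_L|}.$$ *)

theory Defs
  imports "HOL-Analysis.Analysis"
begin

fun chain_exp :: "int \<Rightarrow> int list \<Rightarrow> int" where
  "chain_exp j [] = \<bar>j\<bar>"
| "chain_exp j (x # xs) = \<bar>j - x\<bar> + chain_exp x xs"

definition chainF :: "real \<Rightarrow> nat \<Rightarrow> int \<Rightarrow> real" where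
  "chainF p L j = (\<Sum>\<^sub>\<infinity> xs \<in> {xs :: int list. length xs = L}. p ^ nat (chain_exp j xs))"

end

theory Submission
  imports Defs
begin

text \<open>Every chain exponent starting at r is at least |r|, so with q = sqrt p we have
  p^E \<le> p^(r/2) q^E. Splitting off the first step of a chain, a finite sum of q^E over
  chains of length s is at most ((1 + q)/(1 - q))^s, because
  \<Sum>x. q^|j - x| \<le> (1 + q)/(1 - q); and (1 + q)/(1 - q) = (1 + q)^2/(1 - p) \<le> 4/(1 - p).
  A bound on all finite partial sums bounds the infinite sum.\<close>

lemma infsum_le_if_finite_sums_le:
  fixes f :: "'a \<Rightarrow> real"
  assumes "0 \<le> B" and "\<And>F. finite F \<Longrightarrow> F \<subseteq> A \<Longrightarrow> sum f F \<le> B"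
  shows "infsum f A \<le> B"
proof (cases "f summable_on A")
  case True
  then show ?thesis using assms(2) by (rule infsum_le_finite_sums)
qed (use assms(1) in \<open>simp add: infsum_not_exists\<close>)

lemma sum_geometric_tail_le:
  fixes q :: real
  assumes q: "0 \<le> q" "q < 1" and K: "finite K" "K \<subseteq> {m..}"
  shows "(\<Sum>k\<in>K. q ^ k) \<le> q ^ m / (1 - q)"
proof -
  have inj: "inj_on (\<lambda>k. k - m) K" using K(2) by (intro inj_on_diff_nat) auto
  have "(\<Sum>k\<in>K. q ^ k) = q ^ m * (\<Sum>k\<in>K. q ^ (k - m))"
    using K(2) by (auto simp: sum_distrib_left power_add[symmetric] intro!: sum.cong)
  also have "\<dots> = q ^ m * (\<Sum>n\<in>(\<lambda>k. k - m) ` K. q ^ n)"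
    by (simp add: sum.reindex[OF inj])
  also have "\<dots> \<le> q ^ m * (\<Sum>n. q ^ n)"
    using q K(1) by (intro mult_left_mono sum_le_suminf summable_geometric) auto
  also have "\<dots> = q ^ m / (1 - q)"
    using q by (simp add: suminf_geometric)
  finally show ?thesis .
qed

lemma sum_power_abs_diff_le:
  fixes q :: real
  assumes q: "0 \<le> q" "q < 1" and X: "finite X"
  shows "(\<Sum>x\<in>X. q ^ nat \<bar>j - x\<bar>) \<le> (1 + q) / (1 - q)"
proof -
  let ?d = "\<lambda>x. nat \<bar>j - x\<bar>"
  have half_le: "(\<Sum>x\<in>Y. q ^ ?d x) \<le> q ^ m / (1 - q)"
    if Y: "Y \<subseteq> X" "inj_on ?d Y" "?d ` Y \<subseteq> {m..}" for Y m
    using sum_geometric_tail_le[OF q finite_imageI[OF finite_subset[OF Y(1) X]] Y(3)]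
    by (simp add: sum.reindex[OF Y(2)])
  have "(\<Sum>x\<in>X. q ^ ?d x) = (\<Sum>x\<in>{x\<in>X. j \<le> x}. q ^ ?d x) + (\<Sum>x\<in>{x\<in>X. x < j}. q ^ ?d x)"
    using X by (subst sum.union_disjoint[symmetric]) (auto intro: sum.cong)
  also have "\<dots> \<le> q ^ 0 / (1 - q) + q ^ 1 / (1 - q)"
    by (intro add_mono half_le) (auto simp: inj_on_def)
  also have "\<dots> = (1 + q) / (1 - q)"
    by (simp add: add_divide_distrib)
  finally show ?thesis .
qed

lemma abs_le_chain_exp: "\<bar>j\<bar> \<le> chain_exp j xs"
proof (induction xs arbitrary: j)
  case (Cons x xs)
  show ?case using Cons.IH[of x] by simp
qed simp

lemma chain_exp_nonneg: "0 \<le> chain_exp j xs"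
  using abs_le_chain_exp[of j xs] by linarith

lemma sum_power_chain_exp_le:
  fixes q :: real
  assumes q: "0 \<le> q" "q < 1"
  shows "finite F \<Longrightarrow> F \<subseteq> {xs. length xs = s} \<Longrightarrow>
    (\<Sum>xs\<in>F. q ^ nat (chain_exp j xs)) \<le> ((1 + q) / (1 - q)) ^ s"
proof (induction s arbitrary: F j)
  case 0
  then have "F \<subseteq> {[]}" by auto
  then show ?case using q by (auto simp: subset_singleton_iff power_le_one)
next
  case (Suc s)
  let ?C = "(1 + q) / (1 - q)" and ?T = "hd ` F" and ?G = "tl ` F"
  have fin: "finite ?T" "finite ?G" using Suc.prems(1) by auto
  have tails: "?G \<subseteq> {xs. length xs = s}" using Suc.prems(2) by auto
  have "F \<subseteq> (\<lambda>(x, ys). x # ys) ` (?T \<times> ?G)"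
  proof
    fix xs assume "xs \<in> F"
    moreover from this have "xs = hd xs # tl xs" using Suc.prems(2) by (cases xs) auto
    ultimately show "xs \<in> (\<lambda>(x, ys). x # ys) ` (?T \<times> ?G)" by force
  qed
  then have "(\<Sum>xs\<in>F. q ^ nat (chain_exp j xs))
      \<le> (\<Sum>xs\<in>(\<lambda>(x, ys). x # ys) ` (?T \<times> ?G). q ^ nat (chain_exp j xs))"
    using fin q by (intro sum_mono2) auto
  also have "\<dots> = (\<Sum>(x, ys)\<in>?T \<times> ?G. q ^ nat (chain_exp j (x # ys)))"
    by (simp add: sum.reindex inj_on_def case_prod_beta')
  also have "\<dots> = (\<Sum>x\<in>?T. q ^ nat \<bar>j - x\<bar> * (\<Sum>ys\<in>?G. q ^ nat (chain_exp x ys)))"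
    by (simp add: sum.cartesian_product[symmetric] sum_distrib_left
        nat_add_distrib chain_exp_nonneg power_add)
  also have "\<dots> \<le> (\<Sum>x\<in>?T. q ^ nat \<bar>j - x\<bar> * ?C ^ s)"
    using Suc.IH[OF fin(2) tails] q by (intro sum_mono mult_left_mono) auto
  also have "\<dots> = (\<Sum>x\<in>?T. q ^ nat \<bar>j - x\<bar>) * ?C ^ s"
    by (simp add: sum_distrib_right)
  also have "\<dots> \<le> ?C * ?C ^ s"
    using sum_power_abs_diff_le[OF q fin(1)] q by (intro mult_right_mono) auto
  finally show ?case by simp
qed

lemma power_le_powr_half_mult_sqrt_power:
  fixes p :: real
  assumes "0 < p" "p \<le> 1" "r \<le> e" "0 \<le> e"
  shows "p ^ nat e \<le> p powr (real_of_int r / 2) * sqrt p ^ nat e"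
proof -
  have sqrt_power: "sqrt p ^ nat e = p powr (real_of_int e / 2)"
    using assms by (simp add: powr_half_sqrt[symmetric] powr_realpow[symmetric] powr_powr)
  have "p ^ nat e = p powr (real_of_int e / 2) * p powr (real_of_int e / 2)"
    using assms by (simp add: powr_add[symmetric] powr_realpow[symmetric])
  also have "\<dots> \<le> p powr (real_of_int r / 2) * p powr (real_of_int e / 2)"
    using assms by (intro mult_right_mono powr_mono') auto
  finally show ?thesis by (simp add: sqrt_power)
qed

lemma geometric_ratio_sqrt_le:
  fixes p :: real
  assumes "0 \<le> p" "p < 1"
  shows "(1 + sqrt p) / (1 - sqrt p) \<le> 4 / (1 - p)"
proof -
  have q: "0 \<le> sqrt p" "sqrt p < 1" using assms by auto
  have "(1 + sqrt p) / (1 - sqrt p) = (1 + sqrt p) ^ 2 / ((1 - sqrt p) * (1 + sqrt p))"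
    using q by (simp add: power2_eq_square)
  also have "\<dots> = (1 + sqrt p) ^ 2 / (1 - p)"
    using assms by (simp add: algebra_simps)
  also have "\<dots> \<le> 2 ^ 2 / (1 - p)"
    using q assms by (intro divide_right_mono power_mono) auto
  finally show ?thesis by simp
qed

theorem lemma9:
  fixes p :: real and s :: nat and r :: int
  assumes "0 < p" and "p < 1" and "0 \<le> r"
  shows "chainF p s r \<le> p powr (real_of_int r / 2) * (1 / (1 - p)) ^ s * 4 ^ s"
  unfolding chainF_def
proof (rule infsum_le_if_finite_sums_le)
  show "0 \<le> p powr (real_of_int r / 2) * (1 / (1 - p)) ^ s * 4 ^ s"
    using assms by simp
  fix F :: "int list set" assume F: "finite F" "F \<subseteq> {xs. length xs = s}"
  have "(\<Sum>xs\<in>F. p ^ nat (chain_exp r xs))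
      \<le> (\<Sum>xs\<in>F. p powr (real_of_int r / 2) * sqrt p ^ nat (chain_exp r xs))"
    using assms abs_le_chain_exp[of r] chain_exp_nonneg[of r]
    by (intro sum_mono power_le_powr_half_mult_sqrt_power) auto
  also have "\<dots> \<le> p powr (real_of_int r / 2) * ((1 + sqrt p) / (1 - sqrt p)) ^ s"
    using assms F by (simp add: sum_distrib_left[symmetric] sum_power_chain_exp_le)
  also have "\<dots> \<le> p powr (real_of_int r / 2) * (4 / (1 - p)) ^ s"
    using assms by (intro mult_left_mono power_mono geometric_ratio_sqrt_le) auto
  finally show "(\<Sum>xs\<in>F. p ^ nat (chain_exp r xs))
      \<le> p powr (real_of_int r / 2) * (1 / (1 - p)) ^ s * 4 ^ s"
    by (simp add: power_divide power_one_over)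
qed

end
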